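(* Let $r_1,r_2>0$ and $g,h\in\Gamma_0(\mathbb{R}^n)$. Then $e_{r_1}g+e_{r_2}h=e_{r_1+r_2}f$ for some $f\in\Gamma_0(\mathbb{R}^n)$; specifically, $$f(x)=\sup_{v\in\mathbb{R}^n}\Big\{\big[e_{r_1}g(x+v)-r_1q(v)\big]+\big[e_{r_2}h(x+v)-r_2q(v)\big]\Big\}.$$
   Context: $\Gamma_0(\mathbb{R}^n)$ is the set of proper convex lsc functions on $\mathbb{R}^n$; $e_rg(x)=\inf_y\{g(y)+\frac r2\|y-x\|^2\}$; $q=\frac12\|\cdot\|^2$. *)

theory Defs
  imports "HOL-Analysis.Analysis"
begin

definition proper_fun :: "('a \<Rightarrow> ereal) \<Rightarrow> bool" where
  "proper_fun f \<longleftrightarrow> (\<forall>x. f x \<noteq> -\<infinity>) \<and> (\<exists>x. f x \<noteq> \<infinity>)"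

definition epigraph_e :: "('a \<Rightarrow> ereal) \<Rightarrow> ('a \<times> real) set" where
  "epigraph_e f = {(x, t). f x \<le> ereal t}"

definition convex_fun :: "('a::real_vector \<Rightarrow> ereal) \<Rightarrow> bool" where
  "convex_fun f \<longleftrightarrow> convex (epigraph_e f)"

definition lsc_fun :: "('a::topological_space \<Rightarrow> ereal) \<Rightarrow> bool" where
  "lsc_fun f \<longleftrightarrow> (\<forall>x. f x \<le> Liminf (at x) f)"

definition Gamma0 :: "('a::euclidean_space \<Rightarrow> ereal) set" where
  "Gamma0 = {f. proper_fun f \<and> convex_fun f \<and> lsc_fun f}"

definition q :: "'a::real_normed_vector \<Rightarrow> real" where
  "q x = (1/2) * (norm x)^2"

definition moreau_env :: "real \<Rightarrow> ('a::real_normed_vector \<Rightarrow> ereal) \<Rightarrow> 'a \<Rightarrow> ereal" where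
  "moreau_env r g x = (INF y. g y + ereal (r / 2 * (norm (y - x))^2))"

end

theory Submission
  imports Defs
begin

text \<open>Each Moreau envelope e_r g of g \<in> Gamma0 is finite (g has a cone minorant), convex, and is
the pointwise infimum of the quadratics c + r q(. - y) lying above it: take y a near-minimiser
and c = g y. When y is the r1:r2 weighted mean of y1 and y2, r1 q(z - y1) + r2 q(z - y2) differs
from (r1 + r2) q(z - y) by a constant, so e_r1 g + e_r2 h is again such an infimum, with curvature
r1 + r2. For any such Phi the deconvolution f = sup_v Phi(. + v) - r q v is at most c at the vertex
y of every majorising quadratic c + r q(. - y), which gives e_r f = Phi. As a supremum of
continuous convex functions that is finite somewhere, f lies in Gamma0.\<close>

lemma q_minus_commute: "q (x - y) = q (y - x)"
  by (simp add: q_def norm_minus_commute)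

lemma weighted_sum_q_parallel_axis:
  fixes a b1 b2 :: "'a::real_inner"
  assumes "r1 *\<^sub>R b1 + r2 *\<^sub>R b2 = 0"
  shows "r1 * q (a - b1) + r2 * q (a - b2) = (r1 + r2) * q a + r1 * q b1 + r2 * q b2"
proof -
  have sq_diff: "(norm (a - b))\<^sup>2 = (norm a)\<^sup>2 - 2 * inner a b + (norm b)\<^sup>2" for b :: 'a
    by (simp add: dot_norm_neg field_simps)
  have "r1 * inner a b1 + r2 * inner a b2 = 0"
    using arg_cong[OF assms, of "inner a"] by (simp add: inner_add_right)
  then show ?thesis
    unfolding q_def sq_diff by (simp add: algebra_simps)
qed

lemma convex_on_q: "convex_on UNIV (q :: 'a::real_normed_vector \<Rightarrow> real)"
proof (rule convex_onI)
  fix t :: real and a b :: 'a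
  assume "0 < t" "t < 1"
  then have "norm ((1 - t) *\<^sub>R a + t *\<^sub>R b) \<le> (1 - t) * norm a + t * norm b"
    using norm_triangle_ineq[of "(1 - t) *\<^sub>R a" "t *\<^sub>R b"] by simp
  then have "(norm ((1 - t) *\<^sub>R a + t *\<^sub>R b))\<^sup>2 \<le> ((1 - t) * norm a + t * norm b)\<^sup>2"
    by (simp add: power_mono)
  also have "\<dots> \<le> (1 - t) * (norm a)\<^sup>2 + t * (norm b)\<^sup>2"
    using convex_onD[OF convex_power2, of t "norm a" "norm b"] \<open>0 < t\<close> \<open>t < 1\<close> by simp
  also have "\<dots> = 2 * ((1 - t) * q a + t * q b)"
    by (simp add: q_def field_simps)
  finally show "q ((1 - t) *\<^sub>R a + t *\<^sub>R b) \<le> (1 - t) * q a + t * q b"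
    by (simp add: q_def)
qed simp

lemma convex_on_translate:
  assumes "convex_on UNIV f"
  shows "convex_on UNIV (\<lambda>x. f (x + v))"
proof (rule convex_onI)
  fix t :: real and x y :: 'a
  have "(1 - t) *\<^sub>R x + t *\<^sub>R y + v = (1 - t) *\<^sub>R (x + v) + t *\<^sub>R (y + v)"
    by (simp add: algebra_simps)
  moreover assume "0 < t" "t < 1"
  ultimately show "f ((1 - t) *\<^sub>R x + t *\<^sub>R y + v) \<le> (1 - t) * f (x + v) + t * f (y + v)"
    using convex_onD[OF assms, of t "x + v" "y + v"] by simp
qed simp

lemma convex_funD:
  assumes "convex_fun g" "g x \<le> ereal a" "g y \<le> ereal b" "0 \<le> u" "0 \<le> v" "u + v = 1"
  shows "g (u *\<^sub>R x + v *\<^sub>R y) \<le> ereal (u * a + v * b)"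
proof -
  have "(x, a) \<in> epigraph_e g" "(y, b) \<in> epigraph_e g"
    using assms by (auto simp: epigraph_e_def)
  then have "u *\<^sub>R (x, a) + v *\<^sub>R (y, b) \<in> epigraph_e g"
    using assms convexD[of "epigraph_e g"] unfolding convex_fun_def by blast
  then show ?thesis by (simp add: epigraph_e_def)
qed

lemma convex_fun_SUP:
  assumes "\<And>i. i \<in> I \<Longrightarrow> convex_fun (f i)"
  shows "convex_fun (\<lambda>x. SUP i\<in>I. f i x)"
proof -
  have "epigraph_e (\<lambda>x. SUP i\<in>I. f i x) = (\<Inter>i\<in>I. epigraph_e (f i))"
    by (auto simp: epigraph_e_def SUP_le_iff)
  then show ?thesis
    using assms unfolding convex_fun_def by (auto intro: convex_INT)
qed

lemma convex_fun_ereal: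
  assumes "convex_on UNIV f"
  shows "convex_fun (\<lambda>x. ereal (f x))"
proof -
  have "epigraph_e (\<lambda>x. ereal (f x)) = epigraph UNIV f"
    by (auto simp: epigraph_e_def epigraph_def)
  then show ?thesis
    using assms unfolding convex_fun_def by (simp add: convex_epigraph)
qed

lemma lsc_fun_SUP:
  assumes "\<And>i. i \<in> I \<Longrightarrow> lsc_fun (f i)"
  shows "lsc_fun (\<lambda>x. SUP i\<in>I. f i x)"
  unfolding lsc_fun_def
proof (intro allI SUP_least)
  fix x i assume "i \<in> I"
  then have "f i x \<le> Liminf (at x) (f i)" using assms unfolding lsc_fun_def by blast
  also have "\<dots> \<le> Liminf (at x) (\<lambda>x. SUP i\<in>I. f i x)"
    using \<open>i \<in> I\<close> by (intro Liminf_mono always_eventually allI SUP_upper)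
  finally show "f i x \<le> Liminf (at x) (\<lambda>x. SUP i\<in>I. f i x)" .
qed

lemma lsc_fun_ereal:
  assumes "continuous_on UNIV f"
  shows "lsc_fun (\<lambda>x. ereal (f x))"
  unfolding lsc_fun_def le_Liminf_iff
proof (intro allI impI)
  fix x and c :: ereal assume "c < ereal (f x)"
  have "((\<lambda>x. ereal (f x)) \<longlongrightarrow> ereal (f x)) (at x)"
    using assms by (intro tendsto_ereal) (metis UNIV_I continuous_on_def at_within_open open_UNIV)
  then show "eventually (\<lambda>y. c < ereal (f y)) (at x)"
    using \<open>c < ereal (f x)\<close> by (rule order_tendstoD)
qed

lemma convex_fun_cone_minorant:
  assumes "convex_fun g" "proper_fun g" "g y0 = ereal a" "0 < d"
    and near: "\<And>y. dist y y0 < d \<Longrightarrow> ereal (a - 1) \<le> g y"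
  shows "ereal (a - 1 - 2 / d * norm (y - y0)) \<le> g y"
proof (cases "norm (y - y0) < d / 2 \<or> g y = \<infinity>")
  case True
  then show ?thesis
  proof
    assume "norm (y - y0) < d / 2"
    then have "ereal (a - 1) \<le> g y"
      using near \<open>0 < d\<close> by (simp add: dist_norm)
    moreover have "ereal (a - 1 - 2 / d * norm (y - y0)) \<le> ereal (a - 1)"
      using \<open>0 < d\<close> by simp
    ultimately show ?thesis by (rule order_trans[rotated])
  qed simp
next
  case False
  with \<open>proper_fun g\<close> obtain b where gb: "g y = ereal b"
    by (cases "g y") (auto simp: proper_fun_def)
  define n where "n = norm (y - y0)"
  define t where "t = d / 2 / n"
  have n: "d / 2 \<le> n" "0 < n"
    using False \<open>0 < d\<close> by (auto simp: n_def)
  then have t: "0 < t" "t \<le> 1"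
    using \<open>0 < d\<close> by (simp_all add: t_def field_simps)
  have "(1 - t) *\<^sub>R y0 + t *\<^sub>R y - y0 = t *\<^sub>R (y - y0)"
    by (simp add: algebra_simps)
  then have "dist ((1 - t) *\<^sub>R y0 + t *\<^sub>R y) y0 = t * n"
    using t by (simp add: dist_norm n_def)
  also have "\<dots> < d"
    using n \<open>0 < d\<close> by (simp add: t_def)
  finally have "ereal (a - 1) \<le> g ((1 - t) *\<^sub>R y0 + t *\<^sub>R y)"
    by (rule near)
  also have "\<dots> \<le> ereal ((1 - t) * a + t * b)"
    using convex_funD[OF \<open>convex_fun g\<close>, of y0 a y b "1 - t" t] assms(3) gb t by simp
  finally have "t * (a - b) \<le> 1"
    by (simp add: algebra_simps)
  then have "a - b \<le> 2 / d * n"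
    using t n \<open>0 < d\<close> by (simp add: t_def field_simps)
  then show ?thesis
    using gb by (simp add: n_def)
qed

lemma Gamma0_cone_minorant:
  assumes "g \<in> Gamma0"
  shows "\<exists>A B y0. 0 \<le> B \<and> (\<forall>y. ereal (A - B * norm (y - y0)) \<le> g y)"
proof -
  have proper: "proper_fun g" and "convex_fun g" "lsc_fun g"
    using assms by (auto simp: Gamma0_def)
  then obtain y0 a where ga: "g y0 = ereal a"
    unfolding proper_fun_def by (metis ereal_cases)
  then have "ereal (a - 1) < g y0"
    by simp
  also have "g y0 \<le> Liminf (at y0) g"
    using \<open>lsc_fun g\<close> unfolding lsc_fun_def ..
  finally have "ereal (a - 1) < Liminf (at y0) g" .
  then have "eventually (\<lambda>y. ereal (a - 1) < g y) (at y0)"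
    by (rule less_LiminfD)
  then obtain d where "0 < d" and d: "\<And>y. y \<noteq> y0 \<Longrightarrow> dist y y0 < d \<Longrightarrow> ereal (a - 1) < g y"
    unfolding eventually_at by auto
  have "ereal (a - 1) \<le> g y" if "dist y y0 < d" for y
    using d[of y] that ga by (cases "y = y0") auto
  then show ?thesis
    using convex_fun_cone_minorant[OF \<open>convex_fun g\<close> proper ga \<open>0 < d\<close>] \<open>0 < d\<close>
    by (intro exI[of _ "a - 1"] exI[of _ "2 / d"] exI[of _ y0]) simp
qed

lemma moreau_env_altdef: "moreau_env r g x = (INF y. g y + ereal (r * q (y - x)))"
  by (simp add: moreau_env_def q_def)

lemma moreau_env_le: "moreau_env r g x \<le> g y + ereal (r * q (y - x))"
  unfolding moreau_env_altdef by (rule INF_lower) simp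

lemma moreau_env_finite:
  fixes g :: "'a::euclidean_space \<Rightarrow> ereal"
  assumes "g \<in> Gamma0" "0 < r"
  shows "\<bar>moreau_env r g x\<bar> \<noteq> \<infinity>"
proof -
  obtain A B y0 where "0 \<le> B" and cone: "\<And>y. ereal (A - B * norm (y - y0)) \<le> g y"
    using Gamma0_cone_minorant[OF assms(1)] by blast
  define c where "c = A - B * norm (x - y0) - B\<^sup>2 / (2 * r)"
  have "ereal c \<le> g y + ereal (r / 2 * (norm (y - x))\<^sup>2)" for y
  proof -
    define s where "s = norm (y - x)"
    have "norm (y - y0) \<le> s + norm (x - y0)"
      using norm_triangle_ineq[of "y - x" "x - y0"] by (simp add: s_def)
    then have "B * norm (y - y0) \<le> B * (s + norm (x - y0))"
      using \<open>0 \<le> B\<close> by (rule mult_left_mono)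
    moreover have "B * s \<le> r / 2 * s\<^sup>2 + B\<^sup>2 / (2 * r)"
      using \<open>0 < r\<close> sum_squares_bound[of "r * s" B] by (simp add: field_simps power2_eq_square)
    ultimately have "ereal c \<le> ereal (A - B * norm (y - y0)) + ereal (r / 2 * s\<^sup>2)"
      by (simp add: c_def distrib_left)
    also have "\<dots> \<le> g y + ereal (r / 2 * s\<^sup>2)"
      using cone by (rule add_right_mono)
    finally show ?thesis by (simp add: s_def)
  qed
  then have "ereal c \<le> moreau_env r g x"
    unfolding moreau_env_def by (rule INF_greatest)
  moreover obtain y where "g y \<noteq> \<infinity>"
    using assms(1) by (auto simp: Gamma0_def proper_fun_def)
  then have "moreau_env r g x \<noteq> \<infinity>"
    using moreau_env_le[of r g x y] by auto
  ultimately show ?thesis by auto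
qed

lemma moreau_env_near_minimizer:
  fixes g :: "'a::euclidean_space \<Rightarrow> ereal"
  assumes "g \<in> Gamma0" "0 < r" "0 < e"
  obtains y b where "g y = ereal b" "b + r * q (y - x) < real_of_ereal (moreau_env r g x) + e"
proof -
  have "moreau_env r g x < ereal (real_of_ereal (moreau_env r g x) + e)"
    using moreau_env_finite[OF assms(1,2), of x] \<open>0 < e\<close> by (cases "moreau_env r g x") auto
  then obtain y where y: "g y + ereal (r * q (y - x)) < ereal (real_of_ereal (moreau_env r g x) + e)"
    unfolding moreau_env_altdef INF_less_iff by blast
  moreover have "g y \<noteq> -\<infinity>"
    using assms(1) by (simp add: Gamma0_def proper_fun_def)
  ultimately obtain b where "g y = ereal b"
    by (cases "g y") auto
  then show thesis
    using that y by simp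
qed

lemma convex_on_moreau_env:
  fixes g :: "'a::euclidean_space \<Rightarrow> ereal"
  assumes "g \<in> Gamma0" "0 < r"
  shows "convex_on UNIV (\<lambda>x. real_of_ereal (moreau_env r g x))"
proof (rule convex_onI)
  let ?E = "\<lambda>x. real_of_ereal (moreau_env r g x)"
  fix t :: real and x1 x2 :: 'a
  assume t: "0 < t" "t < 1"
  define x where "x = (1 - t) *\<^sub>R x1 + t *\<^sub>R x2"
  show "?E x \<le> (1 - t) * ?E x1 + t * ?E x2"
  proof (rule field_le_epsilon)
    fix e :: real assume "0 < e"
    obtain y1 b1 where y1: "g y1 = ereal b1" "b1 + r * q (y1 - x1) < ?E x1 + e"
      using moreau_env_near_minimizer[OF assms \<open>0 < e\<close>] by blast
    obtain y2 b2 where y2: "g y2 = ereal b2" "b2 + r * q (y2 - x2) < ?E x2 + e"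
      using moreau_env_near_minimizer[OF assms \<open>0 < e\<close>] by blast
    define y where "y = (1 - t) *\<^sub>R y1 + t *\<^sub>R y2"
    have "moreau_env r g x \<le> g y + ereal (r * q (y - x))"
      by (rule moreau_env_le)
    also have "g y \<le> ereal ((1 - t) * b1 + t * b2)"
      using assms(1) y1(1) y2(1) t unfolding y_def Gamma0_def by (intro convex_funD) auto
    finally have "moreau_env r g x \<le> ereal ((1 - t) * b1 + t * b2 + r * q (y - x))"
      by (simp add: add_right_mono)
    then have "?E x \<le> (1 - t) * b1 + t * b2 + r * q (y - x)"
      using moreau_env_finite[OF assms, of x] by (cases "moreau_env r g x") auto
    also have q_le: "q (y - x) \<le> (1 - t) * q (y1 - x1) + t * q (y2 - x2)"
    proof -
      have "y - x = (1 - t) *\<^sub>R (y1 - x1) + t *\<^sub>R (y2 - x2)"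
        by (simp add: x_def y_def algebra_simps)
      then show ?thesis
        using convex_onD[OF convex_on_q, of t "y1 - x1" "y2 - x2"] t by simp
    qed
    then have "(1 - t) * b1 + t * b2 + r * q (y - x)
        \<le> (1 - t) * (b1 + r * q (y1 - x1)) + t * (b2 + r * q (y2 - x2))"
      using mult_left_mono[OF q_le, of r] \<open>0 < r\<close> by (simp add: algebra_simps)
    also have "\<dots> \<le> (1 - t) * (?E x1 + e) + t * (?E x2 + e)"
      using t y1(2) y2(2) by (intro add_mono[OF mult_left_mono mult_left_mono]) auto
    finally show "?E x \<le> (1 - t) * ?E x1 + t * ?E x2 + e"
      by (simp add: algebra_simps)
  qed
qed simp

text \<open>For real-valued Phi this holds iff Phi = e_r F for some F.\<close>
definition inf_of_quadratics :: "real \<Rightarrow> ('a::real_normed_vector \<Rightarrow> real) \<Rightarrow> bool" where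
  "inf_of_quadratics r \<Phi> \<longleftrightarrow> (\<forall>x e. 0 < e \<longrightarrow>
     (\<exists>y c. (\<forall>z. \<Phi> z \<le> c + r * q (z - y)) \<and> c + r * q (x - y) < \<Phi> x + e))"

lemma inf_of_quadratics_moreau_env:
  fixes g :: "'a::euclidean_space \<Rightarrow> ereal"
  assumes "g \<in> Gamma0" "0 < r"
  shows "inf_of_quadratics r (\<lambda>x. real_of_ereal (moreau_env r g x))"
  unfolding inf_of_quadratics_def
proof (intro allI impI)
  fix x and e :: real assume "0 < e"
  then obtain y b where y: "g y = ereal b" "b + r * q (y - x) < real_of_ereal (moreau_env r g x) + e"
    using moreau_env_near_minimizer[OF assms] by blast
  have "real_of_ereal (moreau_env r g z) \<le> b + r * q (z - y)" for z
    using moreau_env_le[of r g z y] moreau_env_finite[OF assms, of z] y(1)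
    by (cases "moreau_env r g z") (auto simp: q_minus_commute[of z y])
  then show "\<exists>y c. (\<forall>z. real_of_ereal (moreau_env r g z) \<le> c + r * q (z - y))
      \<and> c + r * q (x - y) < real_of_ereal (moreau_env r g x) + e"
    using y(2) by (intro exI[of _ y] exI[of _ b]) (simp add: q_minus_commute[of x y])
qed

lemma inf_of_quadratics_add:
  fixes \<Phi>1 \<Phi>2 :: "'a::real_inner \<Rightarrow> real"
  assumes "r1 + r2 \<noteq> 0" "inf_of_quadratics r1 \<Phi>1" "inf_of_quadratics r2 \<Phi>2"
  shows "inf_of_quadratics (r1 + r2) (\<lambda>x. \<Phi>1 x + \<Phi>2 x)"
  unfolding inf_of_quadratics_def
proof (intro allI impI)
  fix x and e :: real assume "0 < e"
  then have "0 < e / 2" by simp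
  obtain y1 c1 where y1: "\<And>z. \<Phi>1 z \<le> c1 + r1 * q (z - y1)" "c1 + r1 * q (x - y1) < \<Phi>1 x + e / 2"
    using assms(2) \<open>0 < e / 2\<close> unfolding inf_of_quadratics_def by blast
  obtain y2 c2 where y2: "\<And>z. \<Phi>2 z \<le> c2 + r2 * q (z - y2)" "c2 + r2 * q (x - y2) < \<Phi>2 x + e / 2"
    using assms(3) \<open>0 < e / 2\<close> unfolding inf_of_quadratics_def by blast
  define y where "y = (1 / (r1 + r2)) *\<^sub>R (r1 *\<^sub>R y1 + r2 *\<^sub>R y2)"
  define c where "c = c1 + c2 + r1 * q (y1 - y) + r2 * q (y2 - y)"
  have "r1 *\<^sub>R (y1 - y) + r2 *\<^sub>R (y2 - y) = r1 *\<^sub>R y1 + r2 *\<^sub>R y2 - (r1 + r2) *\<^sub>R y"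
    by (simp add: algebra_simps)
  also have "\<dots> = 0"
    using assms(1) by (simp add: y_def)
  finally have quad: "c1 + r1 * q (z - y1) + (c2 + r2 * q (z - y2)) = c + (r1 + r2) * q (z - y)" for z
    using weighted_sum_q_parallel_axis[of r1 "y1 - y" r2 "y2 - y" "z - y"] by (simp add: c_def)
  show "\<exists>y c. (\<forall>z. \<Phi>1 z + \<Phi>2 z \<le> c + (r1 + r2) * q (z - y))
      \<and> c + (r1 + r2) * q (x - y) < \<Phi>1 x + \<Phi>2 x + e"
  proof (intro exI conjI allI)
    fix z
    show "\<Phi>1 z + \<Phi>2 z \<le> c + (r1 + r2) * q (z - y)"
      using add_mono[OF y1(1)[of z] y2(1)[of z]] quad[of z] by simp
  next
    show "c + (r1 + r2) * q (x - y) < \<Phi>1 x + \<Phi>2 x + e"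
      using y1(2) y2(2) quad[of x] by simp
  qed
qed

text \<open>Hiriart-Urruty's deconvolution of Phi by r q: the least F with Phi \<le> e_r F.\<close>
definition moreau_deconv :: "real \<Rightarrow> ('a::real_normed_vector \<Rightarrow> real) \<Rightarrow> 'a \<Rightarrow> ereal" where
  "moreau_deconv r \<Phi> x = (SUP v. ereal (\<Phi> (x + v) - r * q v))"

lemma moreau_deconv_ge: "ereal (\<Phi> (x + v) - r * q v) \<le> moreau_deconv r \<Phi> x"
  unfolding moreau_deconv_def by (rule SUP_upper) simp

lemma moreau_deconv_le:
  assumes "\<And>z. \<Phi> z \<le> c + r * q (z - y)"
  shows "moreau_deconv r \<Phi> y \<le> ereal c"
  unfolding moreau_deconv_def
proof (rule SUP_least)
  fix v
  show "ereal (\<Phi> (y + v) - r * q v) \<le> ereal c"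
    using assms[of "y + v"] by simp
qed

lemma moreau_env_moreau_deconv:
  assumes "inf_of_quadratics r \<Phi>"
  shows "moreau_env r (moreau_deconv r \<Phi>) x = ereal (\<Phi> x)"
proof (rule antisym)
  show "moreau_env r (moreau_deconv r \<Phi>) x \<le> ereal (\<Phi> x)"
  proof (rule ereal_le_epsilon2)
    fix e :: real assume "0 < e"
    with assms obtain y c where quad: "\<And>z. \<Phi> z \<le> c + r * q (z - y)"
      and close: "c + r * q (x - y) < \<Phi> x + e"
      unfolding inf_of_quadratics_def by blast
    have "moreau_env r (moreau_deconv r \<Phi>) x \<le> moreau_deconv r \<Phi> y + ereal (r * q (y - x))"
      by (rule moreau_env_le)
    also have "\<dots> \<le> ereal c + ereal (r * q (y - x))"
      using moreau_deconv_le[OF quad] by (rule add_right_mono)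
    also have "\<dots> \<le> ereal (\<Phi> x) + ereal e"
      using close by (simp add: q_minus_commute[of x y])
    finally show "moreau_env r (moreau_deconv r \<Phi>) x \<le> ereal (\<Phi> x) + ereal e" .
  qed
next
  show "ereal (\<Phi> x) \<le> moreau_env r (moreau_deconv r \<Phi>) x"
    unfolding moreau_env_altdef
  proof (rule INF_greatest)
    fix y
    have "ereal (\<Phi> x - r * q (x - y)) \<le> moreau_deconv r \<Phi> y"
      using moreau_deconv_ge[of \<Phi> y "x - y" r] by simp
    then have "ereal (\<Phi> x - r * q (x - y)) + ereal (r * q (y - x))
        \<le> moreau_deconv r \<Phi> y + ereal (r * q (y - x))"
      by (rule add_right_mono)
    then show "ereal (\<Phi> x) \<le> moreau_deconv r \<Phi> y + ereal (r * q (y - x))"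
      by (simp add: q_minus_commute[of x y])
  qed
qed

lemma moreau_deconv_Gamma0:
  fixes \<Phi> :: "'a::euclidean_space \<Rightarrow> real"
  assumes "convex_on UNIV \<Phi>" "inf_of_quadratics r \<Phi>"
  shows "moreau_deconv r \<Phi> \<in> Gamma0"
proof -
  have deconv_eq: "moreau_deconv r \<Phi> = (\<lambda>x. SUP v\<in>UNIV. ereal (\<Phi> (x + v) - r * q v))"
    by (simp add: fun_eq_iff moreau_deconv_def)
  have "moreau_deconv r \<Phi> x \<noteq> -\<infinity>" for x
    using moreau_deconv_ge[of \<Phi> x 0 r] by auto
  moreover obtain y c where "\<And>z. \<Phi> z \<le> c + r * q (z - y)"
    using assms(2) zero_less_one unfolding inf_of_quadratics_def by blast
  then have "moreau_deconv r \<Phi> y \<noteq> \<infinity>"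
    using moreau_deconv_le[of \<Phi> c r y] by auto
  ultimately have "proper_fun (moreau_deconv r \<Phi>)"
    unfolding proper_fun_def by blast
  moreover have "convex_fun (moreau_deconv r \<Phi>)"
    unfolding deconv_eq using assms(1)
    by (intro convex_fun_SUP convex_fun_ereal convex_on_diff convex_on_translate)
      (simp_all add: concave_on_const)
  moreover have "continuous_on UNIV \<Phi>"
    using assms(1) by (simp add: convex_on_continuous)
  then have "continuous_on UNIV (\<lambda>x. \<Phi> (x + v))" for v
    by (rule continuous_on_compose2) (auto intro: continuous_intros)
  then have "lsc_fun (moreau_deconv r \<Phi>)"
    unfolding deconv_eq by (intro lsc_fun_SUP lsc_fun_ereal continuous_on_diff continuous_on_const)
  ultimately show ?thesis
    by (simp add: Gamma0_def)
qed

theorem corollary4p41: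
  fixes g h :: "'a::euclidean_space \<Rightarrow> ereal" and r1 r2 :: real
  assumes "r1 > 0" and "r2 > 0" and "g \<in> Gamma0" and "h \<in> Gamma0"
  defines "f \<equiv> (\<lambda>x. SUP v. (moreau_env r1 g (x + v) - ereal (r1 * q v))
                          + (moreau_env r2 h (x + v) - ereal (r2 * q v)))"
  shows "f \<in> Gamma0 \<and> (\<forall>x. moreau_env r1 g x + moreau_env r2 h x = moreau_env (r1 + r2) f x)"
proof -
  define \<Phi> where "\<Phi> = (\<lambda>x. real_of_ereal (moreau_env r1 g x) + real_of_ereal (moreau_env r2 h x))"
  have env_sum: "(moreau_env r1 g x - ereal (r1 * c)) + (moreau_env r2 h x - ereal (r2 * c))
      = ereal (\<Phi> x - (r1 + r2) * c)" for x c
    using moreau_env_finite[OF assms(3,1), of x] moreau_env_finite[OF assms(4,2), of x]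
    by (cases "moreau_env r1 g x"; cases "moreau_env r2 h x") (simp_all add: \<Phi>_def algebra_simps)
  have f_eq: "f = moreau_deconv (r1 + r2) \<Phi>"
    by (simp add: f_def fun_eq_iff moreau_deconv_def env_sum)
  have "inf_of_quadratics (r1 + r2) \<Phi>"
    unfolding \<Phi>_def using assms by (intro inf_of_quadratics_add inf_of_quadratics_moreau_env) auto
  moreover have "convex_on UNIV \<Phi>"
    unfolding \<Phi>_def using assms by (intro convex_on_add convex_on_moreau_env) auto
  moreover have "moreau_env r1 g x + moreau_env r2 h x = ereal (\<Phi> x)" for x
    using env_sum[of x 0] by simp
  ultimately show ?thesis
    by (simp add: f_eq moreau_deconv_Gamma0 moreau_env_moreau_deconv)
qed

end
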